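(* Let $\Pi$ be a ground HEX-program, $\mathbf{A}$ an interpretation, and $U$ an unfounded set of $\Pi$ with respect to $\mathbf{A}$. Let $C\subseteq U$ be a cut of $U$, i.e. (i) $b\not\rightarrow_e a$ for all $a\in C$ and $b\in U$, and (ii) $b\not\rightarrow a$ and $a\not\rightarrow b$ for all $a\in C$ and $b\in U\setminus C$. Then $U\setminus C$ is an unfounded set of $\Pi$ with respect to $\mathbf{A}$.
   Context: Ground HEX-programs. A ground ordinary atom is $p(c_1,\dots,c_\ell)$. A ground external atom is $\&g[\vec p](\vec c)$ with input list $\vec p$ (predicate names or constants) and output constants $\vec c$. A ground HEX-program is a finite set of rules $r$: $a_1\lor\dots\lor a_k\leftarrow b_1,\dots,b_m,\mathrm{not}\,b_{m+1},\dots,\mathrm{not}\,b_n$, with ordinary ground head atoms and each $b_j$ an ordinary or external ground atom; $H(r)=\{a_1,\dots,a_k\}$, $B^+(r)=\{b_1,\dots,b_m\}$, $B^-(r)=\{b_{m+1},\dots,b_n\}$, $B(r)$ the set of body literals. Interpretations: complete consistent sets $\mathbf{A}$ of signed literals $\mathbf{T}a$/$\mathbf{F}a$. $\mathbf{A}\models a$ (ordinary) iff $\mathbf{T}a\in\mathbf{A}$; $\mathbf{A}\models\&g[\vec p](\vec c)$ iff the Boolean oracle $f_{\&g}(\mathbf{A},\vec p,\vec c)=1$, whose value depends only on the extensions in $\mathbf{A}$ of the input predicates in $\vec p$; $\mathbf{A}\models\mathrm{not}\,b$ iff $\mathbf{A}\not\models b$. Unfounded sets: for a set $X$ of ordinary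 ground atoms appearing in $\Pi$, $\mathbf{A}\,\dot\cup\neg.\,X=(\mathbf{A}\setminus\{\mathbf{T}a\mid a\in X\})\cup\{\mathbf{F}a\mid a\in X\}$; $X$ is an unfounded set of $\Pi$ w.r.t. $\mathbf{A}$ iff for every $r\in\Pi$ with $H(r)\cap X\neq\emptyset$: (i) some literal of $B(r)$ is false w.r.t. $\mathbf{A}$, or (ii) some literal of $B(r)$ is false w.r.t. $\mathbf{A}\,\dot\cup\neg.\,X$, or (iii) some atom of $H(r)\setminus X$ is true w.r.t. $\mathbf{A}$. Dependencies: $x\rightarrow y$ iff some $r\in\Pi$ has $x\in H(r)$, $y\in B^+(r)$; $x\rightarrow_e y$ iff some $r\in\Pi$ has $x\in H(r)$ and an external atom $\&g[q_1,\dots,q_n](\vec e)\in B^+(r)\cup B^-(r)$ with some $q_i$ equal to the predicate of $y$. *)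

theory Defs
  imports Main
begin

type_synonym ('p, 'c) oatom = "'p \<times> 'c list"

definition pred_of :: "('p, 'c) oatom \<Rightarrow> 'p" where
  "pred_of a = fst a"

datatype ('p, 'c) input = Pred 'p | Const 'c

text \<open>Body atoms: ordinary ground atoms or ground external atoms g[inputs](outputs).\<close>
datatype ('p, 'c, 'g) batom =
    Ord "('p, 'c) oatom"
  | Ext 'g "('p, 'c) input list" "'c list"

text \<open>Ground rules: disjunctive head, positive body, negative (default-negated) body.\<close>
record ('p, 'c, 'g) rule =
  head :: "('p, 'c) oatom list"
  bpos :: "('p, 'c, 'g) batom list"
  bneg :: "('p, 'c, 'g) batom list"

type_synonym ('p, 'c, 'g) program = "('p, 'c, 'g) rule set"

text \<open>An interpretation (complete, consistent set of signed literals) is represented by the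
  set of ordinary ground atoms that are signed true; all others are signed false.\<close>
type_synonym ('p, 'c) interp = "('p, 'c) oatom set"

text \<open>Semantics type: f g A inputs outputs is the Boolean extsem value of g[inputs](outputs) under A.\<close>
type_synonym ('p, 'c, 'g) extsem = "'g \<Rightarrow> ('p, 'c) interp \<Rightarrow> ('p, 'c) input list \<Rightarrow> 'c list \<Rightarrow> bool"

definition ext_of :: "('p, 'c) interp \<Rightarrow> 'p \<Rightarrow> 'c list set" where
  "ext_of A q = {cs. (q, cs) \<in> A}"

text \<open>Standing assumption: the extsem value depends only on the extensions of the input predicates.\<close>
definition oracle_ok :: "('p, 'c, 'g) extsem \<Rightarrow> bool" where
  "oracle_ok f \<longleftrightarrow> (\<forall>g ps cs A A'.
     (\<forall>q. Pred q \<in> set ps \<longrightarrow> ext_of A q = ext_of A' q) \<longrightarrow> f g A ps cs = f g A' ps cs)"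

fun holds :: "('p, 'c, 'g) extsem \<Rightarrow> ('p, 'c) interp \<Rightarrow> ('p, 'c, 'g) batom \<Rightarrow> bool" where
  "holds f A (Ord a) \<longleftrightarrow> a \<in> A"
| "holds f A (Ext g ps cs) \<longleftrightarrow> f g A ps cs"

definition body_false :: "('p, 'c, 'g) extsem \<Rightarrow> ('p, 'c) interp \<Rightarrow> ('p, 'c, 'g) rule \<Rightarrow> bool" where
  "body_false f A r \<longleftrightarrow>
     (\<exists>b \<in> set (bpos r). \<not> holds f A b) \<or> (\<exists>b \<in> set (bneg r). holds f A b)"

text \<open>A \<union>. \<not>.X: make all atoms of X false.\<close>
definition falsify :: "('p, 'c) interp \<Rightarrow> ('p, 'c) oatom set \<Rightarrow> ('p, 'c) interp" where
  "falsify A X = A - X"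

definition atoms_of :: "('p, 'c, 'g) program \<Rightarrow> ('p, 'c) oatom set" where
  "atoms_of P = (\<Union>r\<in>P. set (head r) \<union> {a. Ord a \<in> set (bpos r) \<union> set (bneg r)})"

definition unfounded :: "('p, 'c, 'g) extsem \<Rightarrow> ('p, 'c, 'g) program \<Rightarrow> ('p, 'c) interp
                         \<Rightarrow> ('p, 'c) oatom set \<Rightarrow> bool" where
  "unfounded f P A X \<longleftrightarrow> X \<subseteq> atoms_of P \<and>
     (\<forall>r \<in> P. set (head r) \<inter> X \<noteq> {} \<longrightarrow>
        body_false f A r \<or> body_false f (falsify A X) r \<or> (\<exists>a \<in> set (head r) - X. a \<in> A))"

definition dep :: "('p, 'c, 'g) program \<Rightarrow> ('p, 'c) oatom \<Rightarrow> ('p, 'c) oatom \<Rightarrow> bool" where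
  "dep P x y \<longleftrightarrow> (\<exists>r \<in> P. x \<in> set (head r) \<and> Ord y \<in> set (bpos r))"

definition dep_e :: "('p, 'c, 'g) program \<Rightarrow> ('p, 'c) oatom \<Rightarrow> ('p, 'c) oatom \<Rightarrow> bool" where
  "dep_e P x y \<longleftrightarrow> (\<exists>r \<in> P. x \<in> set (head r) \<and>
     (\<exists>g ps cs. Ext g ps cs \<in> set (bpos r) \<union> set (bneg r) \<and> Pred (pred_of y) \<in> set ps))"

definition is_cut :: "('p, 'c, 'g) program \<Rightarrow> ('p, 'c) oatom set \<Rightarrow> ('p, 'c) oatom set \<Rightarrow> bool" where
  "is_cut P U C \<longleftrightarrow> C \<subseteq> U \<and>
     (\<forall>a \<in> C. \<forall>b \<in> U. \<not> dep_e P b a) \<and>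
     (\<forall>a \<in> C. \<forall>b \<in> U - C. \<not> dep P b a \<and> \<not> dep P a b)"

end

theory Submission
  imports Defs
begin

text \<open>Removing a cut C from U only changes the interpretation on the atoms of C. A rule whose
  head meets U - C neither depends positively on C nor mentions a predicate of C in an external
  atom, so every body literal that was false after falsifying U is still false after falsifying
  only U - C; negative ordinary literals are harmless because falsifying can only make them
  true.\<close>

lemma ext_of_falsify_eq:
  assumes "X \<subseteq> Y" and "\<forall>cs. (q, cs) \<notin> Y - X"
  shows "ext_of (falsify A X) q = ext_of (falsify A Y) q"
  using assms unfolding ext_of_def falsify_def by auto

lemma oracle_falsify_eq:
  assumes "oracle_ok f" and "X \<subseteq> Y"
    and "\<forall>q cs'. Pred q \<in> set ps \<longrightarrow> (q, cs') \<notin> Y - X"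
  shows "f g (falsify A X) ps cs = f g (falsify A Y) ps cs"
  using assms ext_of_falsify_eq[OF \<open>X \<subseteq> Y\<close>] unfolding oracle_ok_def by blast

lemma body_false_falsify_subset:
  assumes "oracle_ok f" and "X \<subseteq> Y"
    and false_Y: "body_false f (falsify A Y) r" and not_false_A: "\<not> body_false f A r"
    and pos_ord: "\<forall>y. Ord y \<in> set (bpos r) \<longrightarrow> y \<notin> Y - X"
    and ext: "\<forall>g ps cs q cs'. Ext g ps cs \<in> set (bpos r) \<union> set (bneg r) \<longrightarrow>
                 Pred q \<in> set ps \<longrightarrow> (q, cs') \<notin> Y - X"
  shows "body_false f (falsify A X) r"
proof -
  have ext_eq: "f g (falsify A X) ps cs = f g (falsify A Y) ps cs"
    if "Ext g ps cs \<in> set (bpos r) \<union> set (bneg r)" for g ps cs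
    using oracle_falsify_eq[OF \<open>oracle_ok f\<close> \<open>X \<subseteq> Y\<close>] ext that by blast
  from false_Y consider
      (pos) b where "b \<in> set (bpos r)" "\<not> holds f (falsify A Y) b"
    | (neg) b where "b \<in> set (bneg r)" "holds f (falsify A Y) b"
    unfolding body_false_def by blast
  then show ?thesis
  proof cases
    case pos
    have "\<not> holds f (falsify A X) b"
    proof (cases b)
      case (Ord y)
      with pos pos_ord have "y \<notin> Y - X" by blast
      with Ord pos show ?thesis by (auto simp: falsify_def)
    next
      case (Ext g ps cs)
      then show ?thesis using pos ext_eq[of g ps cs] by auto
    qed
    with pos show ?thesis unfolding body_false_def by blast
  next
    case neg
    have "\<not> holds f A b" using neg(1) not_false_A unfolding body_false_def by blast
    with neg(2) obtain g ps cs where "b = Ext g ps cs"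
      by (cases b) (auto simp: falsify_def)
    with neg ext_eq have "holds f (falsify A X) b" by auto
    with neg show ?thesis unfolding body_false_def by blast
  qed
qed

theorem lemma1:
  fixes P :: "('p, 'c, 'g) program" and f :: "('p, 'c, 'g) extsem"
    and A :: "('p, 'c) interp" and U C :: "('p, 'c) oatom set"
  assumes "finite P"
    and "oracle_ok f"
    and "unfounded f P A U"
    and "is_cut P U C"
  shows "unfounded f P A (U - C)"
  unfolding unfounded_def
proof (intro conjI ballI impI)
  show "U - C \<subseteq> atoms_of P" using assms(3) unfolding unfounded_def by blast
next
  fix r assume r: "r \<in> P" "set (head r) \<inter> (U - C) \<noteq> {}"
  then obtain x where x: "x \<in> set (head r)" "x \<in> U - C" by blast
  have removed: "U - (U - C) = C" using assms(4) by (auto simp: is_cut_def)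
  have pos_ord: "\<forall>y. Ord y \<in> set (bpos r) \<longrightarrow> y \<notin> U - (U - C)"
    using assms(4) r(1) x unfolding removed is_cut_def dep_def by blast
  have ext: "\<forall>g ps cs q cs'. Ext g ps cs \<in> set (bpos r) \<union> set (bneg r) \<longrightarrow>
               Pred q \<in> set ps \<longrightarrow> (q, cs') \<notin> U - (U - C)"
    using assms(4) r(1) x unfolding removed is_cut_def dep_e_def pred_of_def by fastforce
  have "body_false f A r \<or> body_false f (falsify A U) r \<or> (\<exists>a \<in> set (head r) - U. a \<in> A)"
    using assms(3) r(1) x unfolding unfounded_def by blast
  then show "body_false f A r \<or> body_false f (falsify A (U - C)) r \<or>
             (\<exists>a \<in> set (head r) - (U - C). a \<in> A)"
    using body_false_falsify_subset[OF assms(2) Diff_subset _ _ pos_ord ext] by blast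
qed

end
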